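(* Let $n\ge 3$ and let $\Delta^c(D_{2n})$ be the conjugacy super commuting graph of the dihedral group $D_{2n}$. (i) If $n$ is odd, the Sombor spectrum of $\Delta^c(D_{2n})$ consists of $-(n-1)\sqrt2$ with multiplicity $n-2$, $-n\sqrt2$ with multiplicity $n-1$, and the three roots (with multiplicity) of \[x\big(x-(n-1)(n-2)\sqrt2\big)\big(x-n(n-1)\sqrt2\big)-(n-1)(5n^2-6n+2)\big(x-n(n-1)\sqrt2\big)-n(5n^2-4n+1)\big(x-(n-1)(n-2)\sqrt2\big).\] (ii) If $n$ is even and $n/2$ is odd, the Sombor spectrum consists of $-(n+1)\sqrt2$ with multiplicity $n-1$, $-(n-1)\sqrt2$ with multiplicity $n-3$, $-(2n-1)\sqrt2$ with multiplicity $1$, and the three roots (with multiplicity) of \[\big(x-(2n-1)\sqrt2\big)\big(x-(n-1)(n+1)\sqrt2\big)\big(x-(n-1)(n-3)\sqrt2\big)-2(n-2)(5n^2-6n+2)\big(x-(n-1)(n+1)\sqrt2\big)-2n(5n^2-2n+2)\big(x-(n-1)(n-3)\sqrt2\big).\] (iii) If $n$ is divisible by $4$, the Sombor spectrum consists of $-(\tfrac n2+1)\sqrt2$ with multiplicity $n-2$, $-(n-1)\sqrt2$ with multiplicity $n-3$, $-(2n-1)\sqrt2$ with multiplicity $1$, and the four roots (with multiplicity) of \[\big(x-(2n-1)\sqrt2\big)\big(x-(n-1)(n-3)\sqrt2\big)\big(x-(\tfrac n2-1)(\tfrac n2+1)\sqrt2\big)^2-2(n-2)(5n^2-6n+2)\big(x-(\tfrac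 n2-1)(\tfrac n2+1)\sqrt2\big)^2-2n\Big[(2n-1)^2+(\tfrac n2+1)^2\Big]\big(x-(n-3)(n-1)\sqrt2\big)\big(x-(\tfrac n2-1)(\tfrac n2+1)\sqrt2\big).\]
   Context: For a finite simple graph $\Gamma$ with vertices $u_1,\dots,u_N$, the Sombor matrix $S(\Gamma)$ has $(i,j)$ entry $\sqrt{\deg(u_i)^2+\deg(u_j)^2}$ if $u_i,u_j$ are adjacent and $0$ otherwise; the Sombor spectrum is the multiset of its eigenvalues. $D_{2n}=\langle a,b: a^n=b^2=e,\ ba=a^{-1}b\rangle$. The conjugacy super commuting graph $\Delta^c(G)$ has vertex set $G$, and distinct $g,h$ are adjacent iff $g,h$ are conjugate in $G$ or there exist distinct $g'$ conjugate to $g$ and $h'$ conjugate to $h$ with $g'h'=h'g'$. *)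

theory Defs
  imports "HOL-Algebra.Group" "Jordan_Normal_Form.Char_Poly"
begin

text \<open>Concrete model: the pair (i, s) with 0 \<le> i < n stands for a^i b^s (s = True meaning b^1).
  Then a^i b^s * a^j b^t = a^(i + (-1)^s j) b^(s+t), using b a = a^-1 b.\<close>

definition dihedral_group :: "nat \<Rightarrow> (int \<times> bool) monoid" where
  "dihedral_group n = \<lparr> carrier = {0..<int n} \<times> UNIV,
     mult = (\<lambda>(i, s) (j, t). ((if s then i - j else i + j) mod int n, s \<noteq> t)),
     one = (0, False) \<rparr>"

definition dihedral_vertices :: "nat \<Rightarrow> (int \<times> bool) list" where
  "dihedral_vertices n = map (\<lambda>i. (int i, False)) [0..<n] @ map (\<lambda>i. (int i, True)) [0..<n]"

definition conjugate_in :: "('a, 'b) monoid_scheme \<Rightarrow> 'a \<Rightarrow> 'a \<Rightarrow> bool" where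
  "conjugate_in G g h \<longleftrightarrow> (\<exists>x\<in>carrier G. h = x \<otimes>\<^bsub>G\<^esub> g \<otimes>\<^bsub>G\<^esub> inv\<^bsub>G\<^esub> x)"

definition csc_adj :: "('a, 'b) monoid_scheme \<Rightarrow> 'a \<Rightarrow> 'a \<Rightarrow> bool" where
  "csc_adj G g h \<longleftrightarrow> g \<in> carrier G \<and> h \<in> carrier G \<and> g \<noteq> h \<and>
     (conjugate_in G g h \<or>
      (\<exists>g'\<in>carrier G. \<exists>h'\<in>carrier G. g' \<noteq> h' \<and> conjugate_in G g g' \<and> conjugate_in G h h'
          \<and> g' \<otimes>\<^bsub>G\<^esub> h' = h' \<otimes>\<^bsub>G\<^esub> g'))"

definition csc_deg :: "('a, 'b) monoid_scheme \<Rightarrow> 'a \<Rightarrow> nat" where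
  "csc_deg G g = card {h \<in> carrier G. csc_adj G g h}"

definition sombor_matrix :: "('a, 'b) monoid_scheme \<Rightarrow> 'a list \<Rightarrow> real mat" where
  "sombor_matrix G vs = mat (length vs) (length vs) (\<lambda>(i, j).
     if csc_adj G (vs ! i) (vs ! j)
     then sqrt (real (csc_deg G (vs ! i)) ^ 2 + real (csc_deg G (vs ! j)) ^ 2) else 0)"

definition sombor_spectrum :: "('a, 'b) monoid_scheme \<Rightarrow> 'a list \<Rightarrow> complex multiset" where
  "sombor_spectrum G vs = proots (char_poly (map_mat complex_of_real (sombor_matrix G vs)))"

definition lin :: "complex \<Rightarrow> complex poly" where
  "lin c = [:- c, 1:]"

end

theory Submission
  imports Defs
begin

(* The conjugacy classes of D_2n are the centre (a^0, and a^(n/2) when n is even), the other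
   rotations, and the reflections, which form one class for odd n and two (a^i b with i even,
   resp. odd) for even n.  Conjugates of a non-central rotation never commute with a reflection,
   and two reflections commute iff their exponents differ by 0 or n/2; hence Delta^c(D_2n) is
   a clique on the centre joined to all vertices, plus disjoint cliques on the other rotations
   and on the reflections, the latter splitting into two cliques exactly when 4 divides n.
   The Sombor matrix of such a graph is constant off the diagonal on blocks of vertices.  Writing
   x I - S = D (I + U V) with D diagonal, Sylvester's identity det (I + U V) = det (I + V U)
   reduces the characteristic polynomial to a power product times the determinant of the small
   quotient matrix, which here is an arrowhead matrix with an explicit determinant. *)

section \<open>Determinants of block-constant matrices\<close>

lemma prod_list_diag_mat_mat: "prod_list (diag_mat (mat n n f)) = (\<Prod>i<n. f (i, i))"
  by (simp add: diag_mat_def prod.list_conv_set_nth atLeast0LessThan)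

lemma det_mat_diag: "det (mat_diag n f) = (\<Prod>i<n. f i :: 'a :: comm_ring_1)"
  unfolding mat_diag_def
  by (subst det_upper_triangular[of _ n]) (auto simp: upper_triangular_def prod_list_diag_mat_mat)

lemma sylvester_det:
  fixes U :: "'a :: field mat"
  assumes U: "U \<in> carrier_mat N p" and V: "V \<in> carrier_mat p N"
  shows "det (1\<^sub>m N + U * V) = det (1\<^sub>m p + V * U)"
proof -
  txt \<open>Both block-triangular factorisations of [[I, U], [-V, I]] compute its determinant.\<close>
  let ?L = "four_block_mat (1\<^sub>m N) (0\<^sub>m N p) (- V) (1\<^sub>m p)"
  let ?M = "four_block_mat (1\<^sub>m N) U (- V) (1\<^sub>m p)"
  have det_L: "det ?L = 1"
    using V by (subst det_four_block_mat_upper_right_zero[of _ N _ p], auto)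
  have "?M = ?L * four_block_mat (1\<^sub>m N) U (0\<^sub>m p N) (1\<^sub>m p + V * U)"
    using U V by (subst mult_four_block_mat, auto simp: algebra_simps)
  hence det_M_via_VU: "det ?M = det (1\<^sub>m p + V * U)"
    using U V by (simp add: det_mult[of _ "N + p"] det_L det_four_block_mat_lower_left_zero[of _ N _ p])
  have "(1\<^sub>m N + U * V) * 1\<^sub>m N + U * - V = (1\<^sub>m N + U * V) + - (U * V)"
    using U V by (simp add: mult_minus_distrib_mat[of _ N p])
  also have "\<dots> = 1\<^sub>m N"
    using U V by (intro eq_matI) auto
  finally have "?M = four_block_mat (1\<^sub>m N + U * V) U (0\<^sub>m p N) (1\<^sub>m p) * ?L"
    using U V by (subst mult_four_block_mat) auto
  hence det_M_via_UV: "det ?M = det (1\<^sub>m N + U * V)"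
    using U V by (simp add: det_mult[of _ "N + p"] det_L det_four_block_mat_lower_left_zero[of _ N _ p])
  show ?thesis
    using det_M_via_VU det_M_via_UV by simp
qed

lemma mult_block_selector_left:
  assumes "\<And>i. i < N \<Longrightarrow> blk i < p"
  shows "mat N p (\<lambda>(i, b). if blk i = b then f i else 0) * mat p M (\<lambda>(b, j). g b j)
    = mat N M (\<lambda>(i, j). f i * g (blk i) j)"
proof (rule eq_matI)
  fix i j assume "i < dim_row (mat N M (\<lambda>(i, j). f i * g (blk i) j))" "j < dim_col (mat N M (\<lambda>(i, j). f i * g (blk i) j))"
  hence ij: "i < N" "j < M" by simp_all
  hence "(mat N p (\<lambda>(i, b). if blk i = b then f i else 0) * mat p M (\<lambda>(b, j). g b j)) $$ (i, j)
      = (\<Sum>b<p. (if blk i = b then f i else 0) * g b j)"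
    by (simp add: scalar_prod_def atLeast0LessThan)
  also have "\<dots> = f i * g (blk i) j"
    using assms ij by (simp add: if_distrib[of "\<lambda>x. x * _"] sum.delta cong: if_cong)
  finally show "(mat N p (\<lambda>(i, b). if blk i = b then f i else 0) * mat p M (\<lambda>(b, j). g b j)) $$ (i, j)
      = mat N M (\<lambda>(i, j). f i * g (blk i) j) $$ (i, j)"
    using ij by simp
qed auto

lemma mult_block_selector_right:
  "mat M N (\<lambda>(b, j). g b (blk j)) * mat N p (\<lambda>(i, c). if blk i = c then f i else (0 :: 'a :: comm_ring_1))
    = mat M p (\<lambda>(b, c). g b c * (\<Sum>i | i < N \<and> blk i = c. f i))"
proof (rule eq_matI)
  fix b c assume "b < dim_row (mat M p (\<lambda>(b, c). g b c * (\<Sum>i | i < N \<and> blk i = c. f i)))"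
    "c < dim_col (mat M p (\<lambda>(b, c). g b c * (\<Sum>i | i < N \<and> blk i = c. f i)))"
  hence bc: "b < M" "c < p" by simp_all
  hence "(mat M N (\<lambda>(b, j). g b (blk j)) * mat N p (\<lambda>(i, c). if blk i = c then f i else 0)) $$ (b, c)
      = (\<Sum>i<N. g b (blk i) * (if blk i = c then f i else 0))"
    by (simp add: scalar_prod_def atLeast0LessThan)
  also have "\<dots> = (\<Sum>i | i < N \<and> blk i = c. g b c * f i)"
    by (rule sum.mono_neutral_cong_right) auto
  finally show "(mat M N (\<lambda>(b, j). g b (blk j)) * mat N p (\<lambda>(i, c). if blk i = c then f i else 0)) $$ (b, c)
      = mat M p (\<lambda>(b, c). g b c * (\<Sum>i | i < N \<and> blk i = c. f i)) $$ (b, c)"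
    using bc by (simp add: sum_distrib_left)
qed auto

text \<open>Entry (b, c) of the quotient matrix is the sum, over the columns in block c, of a row of
  block b of the matrix with entries C (blk i) (blk j) off the diagonal and 0 on it.\<close>

definition block_quotient_mat :: "nat \<Rightarrow> (nat \<Rightarrow> nat \<Rightarrow> 'a :: comm_ring_1) \<Rightarrow> (nat \<Rightarrow> nat) \<Rightarrow> 'a mat" where
  "block_quotient_mat p C k = mat p p (\<lambda>(b, c). C b c * of_nat (k c) - (if b = c then C b b else 0))"

lemma block_quotient_mat_carrier [simp]: "block_quotient_mat p C k \<in> carrier_mat p p"
  by (simp add: block_quotient_mat_def)

lemma poly_char_poly:
  fixes A :: "'a :: field mat"
  assumes "A \<in> carrier_mat n n"
  shows "poly (char_poly A) x = det (x \<cdot>\<^sub>m 1\<^sub>m n - A)"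
  using assms by (subst char_poly_matrix[of _ n]) (auto intro!: arg_cong[where f = det] eq_matI simp: char_matrix_def)

lemma det_block_constant:
  fixes C :: "nat \<Rightarrow> nat \<Rightarrow> 'a :: field"
  assumes blk: "\<And>i. i < N \<Longrightarrow> blk i < p" and nz: "\<And>b. b < p \<Longrightarrow> x + C b b \<noteq> 0"
  shows "det (x \<cdot>\<^sub>m 1\<^sub>m N - mat N N (\<lambda>(i, j). if i = j then 0 else C (blk i) (blk j))) * (\<Prod>b<p. x + C b b)
    = (\<Prod>i<N. x + C (blk i) (blk i)) * det (x \<cdot>\<^sub>m 1\<^sub>m p - block_quotient_mat p C (\<lambda>c. card {i. i < N \<and> blk i = c}))"
proof -
  define w where "w i = x + C (blk i) (blk i)" for i
  define k where "k c = card {i. i < N \<and> blk i = c}" for c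
  define U where "U = mat N p (\<lambda>(i, b). if blk i = b then 1 / w i else 0)"
  define V where "V = mat p N (\<lambda>(b, j). - C b (blk j))"
  define Q where "Q = mat p p (\<lambda>(b, c). (if b = c then x + C b b else 0) - C b c * of_nat (k c))"
  have w: "i < N \<Longrightarrow> w i \<noteq> 0" for i using nz blk unfolding w_def by auto
  have UV: "U * V = mat N N (\<lambda>(i, j). 1 / w i * - C (blk i) (blk j))"
    unfolding U_def V_def by (rule mult_block_selector_left[OF blk])
  have VU: "V * U = mat p p (\<lambda>(b, c). - C b c * (\<Sum>i | i < N \<and> blk i = c. 1 / w i))"
    unfolding U_def V_def by (rule mult_block_selector_right)
  have factor: "x \<cdot>\<^sub>m 1\<^sub>m N - mat N N (\<lambda>(i, j). if i = j then 0 else C (blk i) (blk j))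
      = mat_diag N w * (1\<^sub>m N + U * V)"
    unfolding UV
    by (subst mat_diag_mult_left[of _ N N], force, rule eq_matI, auto simp: w ring_distribs, simp add: w_def)
  have "det (x \<cdot>\<^sub>m 1\<^sub>m N - mat N N (\<lambda>(i, j). if i = j then 0 else C (blk i) (blk j)))
      = det (mat_diag N w) * det (1\<^sub>m N + U * V)"
    unfolding factor by (rule det_mult[of _ N]) (auto simp: U_def V_def)
  also have "\<dots> = (\<Prod>i<N. w i) * det (1\<^sub>m p + V * U)"
    by (simp add: det_mat_diag sylvester_det[of _ N p] U_def V_def)
  also have "1\<^sub>m p + V * U = Q * mat_diag p (\<lambda>c. 1 / (x + C c c))"
  proof -
    have sum_w: "(\<Sum>i | i < N \<and> blk i = c. 1 / w i) = of_nat (k c) / (x + C c c)" for c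
    proof -
      have "(\<Sum>i | i < N \<and> blk i = c. 1 / w i) = (\<Sum>i | i < N \<and> blk i = c. 1 / (x + C c c))"
        by (intro sum.cong) (auto simp: w_def)
      thus ?thesis by (simp add: k_def)
    qed
    show ?thesis
      unfolding VU by (subst mat_diag_mult_right[of _ p p], force simp: Q_def, rule eq_matI, auto simp: Q_def sum_w nz field_simps)
  qed
  also have "det \<dots> = det Q * (\<Prod>c<p. 1 / (x + C c c))"
    by (simp add: det_mult[of _ p] Q_def det_mat_diag)
  also have "Q = x \<cdot>\<^sub>m 1\<^sub>m p - block_quotient_mat p C k"
    unfolding Q_def block_quotient_mat_def by (rule eq_matI) auto
  finally show ?thesis
    unfolding w_def k_def using nz by (simp add: prod_dividef)
qed

lemma poly_eq_cofinite:
  fixes p q :: "'a :: {idom, ring_char_0} poly"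
  assumes "finite F" and "\<And>x. x \<notin> F \<Longrightarrow> poly p x = poly q x"
  shows "p = q"
proof (rule ccontr)
  assume "p \<noteq> q"
  hence "finite {x. poly (p - q) x = 0}" by (intro poly_roots_finite) simp
  moreover have "UNIV \<subseteq> F \<union> {x. poly (p - q) x = 0}" using assms(2) by auto
  ultimately show False using assms(1) infinite_UNIV_char_0 finite_subset by (metis finite_Un)
qed

lemma char_poly_block_constant:
  fixes C :: "nat \<Rightarrow> nat \<Rightarrow> 'a :: field_char_0"
  assumes blk: "\<And>i. i < N \<Longrightarrow> blk i < p"
    and k: "\<And>b. b < p \<Longrightarrow> card {i. i < N \<and> blk i = b} = k b"
    and k_pos: "\<And>b. b < p \<Longrightarrow> k b \<ge> 1"
  shows "char_poly (mat N N (\<lambda>(i, j). if i = j then 0 else C (blk i) (blk j)))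
     = (\<Prod>b<p. [:C b b, 1:] ^ (k b - 1)) * char_poly (block_quotient_mat p C k)"
proof (rule poly_eq_cofinite)
  let ?A = "mat N N (\<lambda>(i, j). if i = j then 0 else C (blk i) (blk j))"
  show "finite ((\<lambda>b. - C b b) ` {..<p})" by simp
  fix x assume x: "x \<notin> (\<lambda>b. - C b b) ` {..<p}"
  have nz: "x + C b b \<noteq> 0" if "b < p" for b
  proof
    assume "x + C b b = 0"
    hence "x = - C b b" by (simp add: add_eq_0_iff)
    with x that show False by auto
  qed
  have quotient: "block_quotient_mat p C (\<lambda>c. card {i. i < N \<and> blk i = c}) = block_quotient_mat p C k"
    unfolding block_quotient_mat_def by (rule eq_matI) (auto simp: k)
  have "(\<Prod>i<N. x + C (blk i) (blk i)) = (\<Prod>b<p. \<Prod>i\<in>{i \<in> {..<N}. blk i = b}. x + C (blk i) (blk i))"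
    by (rule prod.group[symmetric]) (auto simp: blk)
  also have "\<dots> = (\<Prod>b<p. (x + C b b) ^ k b)"
    by (intro prod.cong refl) (simp add: k[symmetric])
  finally have classes: "(\<Prod>i<N. x + C (blk i) (blk i)) = (\<Prod>b<p. (x + C b b) ^ k b)" .
  have "poly (char_poly ?A) x = (\<Prod>b<p. (x + C b b) ^ k b) * poly (char_poly (block_quotient_mat p C k)) x
      / (\<Prod>b<p. x + C b b)"
    using det_block_constant[of N blk p x C, OF blk nz] nz
    by (simp add: poly_char_poly[of _ N] poly_char_poly[of _ p] quotient classes eq_divide_eq)
  also have "\<dots> = (\<Prod>b<p. (x + C b b) ^ (k b - 1)) * poly (char_poly (block_quotient_mat p C k)) x"
  proof -
    have "(\<Prod>b<p. (x + C b b) ^ k b) = (\<Prod>b<p. (x + C b b) ^ (k b - 1)) * (\<Prod>b<p. x + C b b)"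
      unfolding prod.distrib[symmetric]
      by (intro prod.cong refl) (metis Suc_diff_le diff_Suc_1 lessThan_iff k_pos power_Suc2)
    thus ?thesis using nz by simp
  qed
  also have "\<dots> = poly ((\<Prod>b<p. [:C b b, 1:] ^ (k b - 1)) * char_poly (block_quotient_mat p C k)) x"
    by (simp add: poly_prod add.commute)
  finally show "poly (char_poly ?A) x = poly ((\<Prod>b<p. [:C b b, 1:] ^ (k b - 1)) * char_poly (block_quotient_mat p C k)) x" .
qed

lemma det_arrowhead:
  fixes a :: "'a :: field" and u v d :: "nat \<Rightarrow> 'a"
  assumes d: "\<And>b. b \<in> {1..q} \<Longrightarrow> d b \<noteq> 0"
  shows "det (mat (Suc q) (Suc q) (\<lambda>(i, j). if i = 0 then (if j = 0 then a else u j)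
            else if j = 0 then v i else if i = j then d i else 0))
       = a * (\<Prod>b\<in>{1..q}. d b) - (\<Sum>b\<in>{1..q}. u b * v b * (\<Prod>c\<in>{1..q} - {b}. d c))"
    (is "det ?M = _")
proof -
  define s where "s = a - (\<Sum>b\<in>{1..q}. u b * v b / d b)"
  define E where "E = mat (Suc q) (Suc q) (\<lambda>(i, j). if i = j then 1 else if i = 0 then - u j / d j else 0)"
  have idx: "{..<Suc q} = insert 0 {1..q}" by auto
  have EM: "E * ?M = mat (Suc q) (Suc q) (\<lambda>(i, j). if i = 0 then (if j = 0 then s else 0)
            else if j = 0 then v i else if i = j then d i else 0)" (is "_ = ?L")
  proof (rule eq_matI)
    fix i j assume "i < dim_row ?L" "j < dim_col ?L"
    hence ij: "i < Suc q" "j < Suc q" by simp_all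
    hence "(E * ?M) $$ (i, j) = (\<Sum>k\<in>insert 0 {1..q}. E $$ (i, k) * ?M $$ (k, j))"
      by (simp add: scalar_prod_def atLeast0LessThan idx E_def)
    also have "\<dots> = ?L $$ (i, j)"
    proof (cases "i = 0")
      case True
      thus ?thesis using ij d
        by (auto simp: E_def s_def sum_negf sum_subtractf sum.If_cases Int_absorb1 diff_divide_eq_iff
                       if_distrib[of "\<lambda>x. _ * x"] cong: if_cong)
    next
      case False
      thus ?thesis using ij by (auto simp: E_def if_distrib[of "\<lambda>x. x * _"] sum.delta cong: if_cong)
    qed
    finally show "(E * ?M) $$ (i, j) = ?L $$ (i, j)" .
  qed (auto simp: E_def)
  have "det E = 1"
    unfolding E_def by (subst det_upper_triangular[of _ "Suc q"]) (auto simp: upper_triangular_def prod_list_diag_mat_mat)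
  moreover have "det (E * ?M) = det E * det ?M"
    by (rule det_mult[of _ "Suc q"]) (auto simp: E_def)
  ultimately have "det ?M = det (E * ?M)" by simp
  also have "\<dots> = s * (\<Prod>b\<in>{1..q}. d b)"
    unfolding EM by (subst det_lower_triangular[of "Suc q"]) (auto simp: prod_list_diag_mat_mat idx intro!: prod.cong)
  also have "\<dots> = a * (\<Prod>b\<in>{1..q}. d b) - (\<Sum>b\<in>{1..q}. u b * v b * (\<Prod>c\<in>{1..q} - {b}. d c))"
    unfolding s_def left_diff_distrib sum_distrib_right
    by (intro arg_cong2[where f = minus] refl sum.cong) (simp add: prod.remove[of _ _ d] d)
  finally show ?thesis .
qed

section \<open>Sombor spectra of graphs with block-constant adjacency\<close>

lemma card_nth_filter_distinct:
  assumes "distinct vs"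
  shows "card {i. i < length vs \<and> P (vs ! i)} = card {g \<in> set vs. P g}"
proof -
  have "{g \<in> set vs. P g} = (\<lambda>i. vs ! i) ` {i. i < length vs \<and> P (vs ! i)}"
    by (auto simp: in_set_conv_nth)
  moreover have "inj_on (\<lambda>i. vs ! i) {i. i < length vs \<and> P (vs ! i)}"
    using assms by (auto simp: inj_on_def nth_eq_iff_index_eq)
  ultimately show ?thesis by (simp add: card_image)
qed

lemma csc_deg_block_constant:
  fixes cls :: "'a \<Rightarrow> nat"
  assumes "finite (carrier G)" and "g \<in> carrier G"
    and cls: "\<And>g. g \<in> carrier G \<Longrightarrow> cls g < p"
    and adj: "\<And>h. h \<in> carrier G \<Longrightarrow> csc_adj G g h \<longleftrightarrow> g \<noteq> h \<and> badj (cls g) (cls h)"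
    and "badj (cls g) (cls g)"
  shows "csc_deg G g = (\<Sum>c<p. if badj (cls g) c then card {h \<in> carrier G. cls h = c} else 0) - 1"
proof -
  let ?S = "{h \<in> carrier G. badj (cls g) (cls h)}"
  have "csc_deg G g = card (?S - {g})"
    unfolding csc_deg_def using adj by (intro arg_cong[where f = card]) auto
  also have "\<dots> = card ?S - 1"
    using assms by (simp add: card_Diff_singleton)
  also have "card ?S = (\<Sum>c<p. card {h \<in> ?S. cls h = c})"
    using assms by (subst card_eq_sum, subst sum.group[symmetric, of _ _ cls]) (auto simp: cls)
  also have "\<dots> = (\<Sum>c<p. if badj (cls g) c then card {h \<in> carrier G. cls h = c} else 0)"
  proof (intro sum.cong refl)
    fix c
    have "{h \<in> ?S. cls h = c} = (if badj (cls g) c then {h \<in> carrier G. cls h = c} else {})"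
      by auto
    thus "card {h \<in> ?S. cls h = c} = (if badj (cls g) c then card {h \<in> carrier G. cls h = c} else 0)"
      by simp
  qed
  finally show ?thesis .
qed

lemma sombor_spectrum_block_constant:
  fixes G :: "('a, 'b) monoid_scheme" and cls :: "'a \<Rightarrow> nat" and C :: "nat \<Rightarrow> nat \<Rightarrow> complex"
  assumes dist: "distinct vs" and vs: "set vs = carrier G"
    and cls: "\<And>g. g \<in> carrier G \<Longrightarrow> cls g < p"
    and adj: "\<And>g h. g \<in> carrier G \<Longrightarrow> h \<in> carrier G \<Longrightarrow> csc_adj G g h \<longleftrightarrow> g \<noteq> h \<and> badj (cls g) (cls h)"
    and badj_refl: "\<And>b. b < p \<Longrightarrow> badj b b"
    and sz: "\<And>b. b < p \<Longrightarrow> card {g \<in> carrier G. cls g = b} = sz b"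
    and sz_pos: "\<And>b. b < p \<Longrightarrow> sz b \<ge> 1"
    and dg: "\<And>b. b < p \<Longrightarrow> dg b = (\<Sum>c<p. if badj b c then sz c else 0) - 1"
    and C: "\<And>b c. C b c = complex_of_real (if badj b c then sqrt (real (dg b)^2 + real (dg c)^2) else 0)"
  shows "sombor_spectrum G vs = (\<Sum>b<p. replicate_mset (sz b - 1) (- C b b)) + proots (char_poly (block_quotient_mat p C sz))"
proof -
  define N where "N = length vs"
  define blk where "blk i = cls (vs ! i)" for i
  have mem: "i < N \<Longrightarrow> vs ! i \<in> carrier G" for i
    using vs unfolding N_def by (metis nth_mem)
  have blk: "i < N \<Longrightarrow> blk i < p" for i
    using cls mem unfolding blk_def by blast
  have card_blk: "card {i. i < N \<and> blk i = b} = sz b" if "b < p" for b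
    using card_nth_filter_distinct[OF dist, of "\<lambda>g. cls g = b"] sz[OF that] vs unfolding N_def blk_def by simp
  have deg: "csc_deg G (vs ! i) = dg (blk i)" if "i < N" for i
  proof -
    have "csc_deg G (vs ! i) = (\<Sum>c<p. if badj (blk i) c then card {h \<in> carrier G. cls h = c} else 0) - 1"
      unfolding blk_def
      by (rule csc_deg_block_constant) (use vs[symmetric] mem[OF that] cls adj badj_refl in auto)
    also have "\<dots> = (\<Sum>c<p. if badj (blk i) c then sz c else 0) - 1"
      by (intro arg_cong[where f = "\<lambda>t. t - 1"] sum.cong refl) (simp add: sz)
    also have "\<dots> = dg (blk i)"
      using dg[OF blk[OF that]] by simp
    finally show ?thesis .
  qed
  have "map_mat complex_of_real (sombor_matrix G vs) = mat N N (\<lambda>(i, j). if i = j then 0 else C (blk i) (blk j))"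
    unfolding sombor_matrix_def N_def[symmetric]
    using adj[OF mem mem] dist by (intro eq_matI) (auto simp: deg C blk_def N_def nth_eq_iff_index_eq)
  moreover have char_poly: "char_poly (mat N N (\<lambda>(i, j). if i = j then 0 else C (blk i) (blk j)))
     = (\<Prod>b<p. [:C b b, 1:] ^ (sz b - 1)) * char_poly (block_quotient_mat p C sz)"
    using blk card_blk sz_pos by (rule char_poly_block_constant)
  moreover have "char_poly (block_quotient_mat p C sz) \<noteq> 0"
    using degree_monic_char_poly[of "mat N N (\<lambda>(i, j). if i = j then 0 else C (blk i) (blk j))" N] char_poly
    by auto
  ultimately show ?thesis
    unfolding sombor_spectrum_def by (simp add: proots_mult proots_prod proots_power)
qed

lemma char_poly_star_block_quotient:
  fixes C :: "nat \<Rightarrow> nat \<Rightarrow> 'a :: field_char_0"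
  assumes leaves: "\<And>b c. b \<noteq> c \<Longrightarrow> b \<noteq> 0 \<Longrightarrow> c \<noteq> 0 \<Longrightarrow> C b c = 0"
    and k_pos: "\<And>b. b \<le> q \<Longrightarrow> k b \<ge> 1"
  defines "e b \<equiv> C b b * of_nat (k b - 1)"
  shows "char_poly (block_quotient_mat (Suc q) C k) = [:- e 0, 1:] * (\<Prod>b\<in>{1..q}. [:- e b, 1:])
     - (\<Sum>b\<in>{1..q}. Polynomial.smult (C 0 b * C b 0 * of_nat (k 0 * k b)) (\<Prod>c\<in>{1..q} - {b}. [:- e c, 1:]))"
proof (rule poly_eq_cofinite)
  show "finite (e ` {1..q})" by simp
  fix x assume x: "x \<notin> e ` {1..q}"
  have leaf_nonzero: "x - e b \<noteq> 0" if "b \<in> {1..q}" for b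
    using x that by auto
  have k_minus_1: "of_nat (k b - Suc 0) = (of_nat (k b) - 1 :: 'a)" if "b < Suc q" for b
    using k_pos[of b] that by (simp add: of_nat_diff)
  have arrowhead: "x \<cdot>\<^sub>m 1\<^sub>m (Suc q) - block_quotient_mat (Suc q) C k
    = mat (Suc q) (Suc q) (\<lambda>(i, j). if i = 0 then (if j = 0 then x - e 0 else - C 0 j * of_nat (k j))
        else if j = 0 then - C i 0 * of_nat (k 0) else if i = j then x - e i else 0)"
    unfolding block_quotient_mat_def e_def
    by (intro eq_matI) (auto simp: leaves k_minus_1 right_diff_distrib)
  have "poly (char_poly (block_quotient_mat (Suc q) C k)) x
      = (x - e 0) * (\<Prod>b\<in>{1..q}. x - e b)
        - (\<Sum>b\<in>{1..q}. (- C 0 b * of_nat (k b)) * (- C b 0 * of_nat (k 0)) * (\<Prod>c\<in>{1..q} - {b}. x - e c))"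
    unfolding poly_char_poly[OF block_quotient_mat_carrier] arrowhead
    by (rule det_arrowhead[where a = "x - e 0" and u = "\<lambda>j. - C 0 j * of_nat (k j)"
          and v = "\<lambda>i. - C i 0 * of_nat (k 0)" and d = "\<lambda>i. x - e i", OF leaf_nonzero])
  also have "\<dots> = poly ([:- e 0, 1:] * (\<Prod>b\<in>{1..q}. [:- e b, 1:])
     - (\<Sum>b\<in>{1..q}. Polynomial.smult (C 0 b * C b 0 * of_nat (k 0 * k b)) (\<Prod>c\<in>{1..q} - {b}. [:- e c, 1:]))) x"
    by (simp add: poly_prod poly_sum algebra_simps)
  finally show "poly (char_poly (block_quotient_mat (Suc q) C k)) x = poly ([:- e 0, 1:] * (\<Prod>b\<in>{1..q}. [:- e b, 1:])
     - (\<Sum>b\<in>{1..q}. Polynomial.smult (C 0 b * C b 0 * of_nat (k 0 * k b)) (\<Prod>c\<in>{1..q} - {b}. [:- e c, 1:]))) x" .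
qed

lemma sombor_spectrum_clique_star:
  fixes G :: "('a, 'b) monoid_scheme" and cls :: "'a \<Rightarrow> nat" and s :: "nat \<Rightarrow> nat"
  assumes dist: "distinct vs" and vs: "set vs = carrier G"
    and cls: "\<And>g. g \<in> carrier G \<Longrightarrow> cls g \<le> q"
    and adj: "\<And>g h. g \<in> carrier G \<Longrightarrow> h \<in> carrier G \<Longrightarrow>
      csc_adj G g h \<longleftrightarrow> g \<noteq> h \<and> (cls g = cls h \<or> cls g = 0 \<or> cls h = 0)"
    and s: "\<And>b. b \<le> q \<Longrightarrow> card {g \<in> carrier G. cls g = b} = s b"
    and s_pos: "\<And>b. b \<le> q \<Longrightarrow> s b \<ge> 1"
    and d: "\<And>b. b \<le> q \<Longrightarrow> d b = (if b = 0 then (\<Sum>c\<le>q. s c) else s 0 + s b) - 1"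
  defines "w b \<equiv> of_nat (d b) * complex_of_real (sqrt 2)"
  shows "sombor_spectrum G vs = (\<Sum>b\<le>q. replicate_mset (s b - 1) (- w b))
     + proots (lin (w 0 * of_nat (s 0 - 1)) * (\<Prod>b\<in>{1..q}. lin (w b * of_nat (s b - 1)))
        - (\<Sum>b\<in>{1..q}. Polynomial.smult (of_nat ((d 0 ^ 2 + d b ^ 2) * (s 0 * s b)))
             (\<Prod>c\<in>{1..q} - {b}. lin (w c * of_nat (s c - 1)))))"
proof -
  define badj where "badj b c \<longleftrightarrow> b = c \<or> b = 0 \<or> c = 0" for b c :: nat
  define C where "C b c = complex_of_real (if badj b c then sqrt (real (d b)^2 + real (d c)^2) else 0)" for b c
  have C_diag: "C b b = w b" for b
    by (simp add: C_def w_def badj_def real_sqrt_mult flip: mult_2)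
  have C_hub: "C 0 b * C b 0 = of_nat (d 0 ^ 2 + d b ^ 2)" for b
  proof -
    have "sqrt (real (d 0)^2 + real (d b)^2) * sqrt (real (d b)^2 + real (d 0)^2) = real (d 0)^2 + real (d b)^2"
      by (simp add: add.commute)
    thus ?thesis by (simp add: C_def badj_def flip: of_real_mult)
  qed
  have C_leaves: "C b c = 0" if "b \<noteq> c" "b \<noteq> 0" "c \<noteq> 0" for b c
    using that by (simp add: C_def badj_def)
  have deg: "d b = (\<Sum>c<Suc q. if badj b c then s c else 0) - 1" if "b < Suc q" for b
  proof (cases "b = 0")
    case False
    have "(\<Sum>c<Suc q. if badj b c then s c else 0) = sum s {c \<in> {..<Suc q}. badj b c}"
      by (rule sum.inter_filter[symmetric]) simp
    also have "{c \<in> {..<Suc q}. badj b c} = {0, b}"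
      using that False by (auto simp: badj_def)
    finally show ?thesis using False that by (simp add: d)
  qed (simp add: d badj_def lessThan_Suc_atMost)
  have "sombor_spectrum G vs = (\<Sum>b<Suc q. replicate_mset (s b - 1) (- C b b))
      + proots (char_poly (block_quotient_mat (Suc q) C s))"
    by (rule sombor_spectrum_block_constant[where badj = badj and dg = d])
       (use dist vs cls adj s s_pos deg in \<open>auto simp: badj_def C_def less_Suc_eq_le\<close>)
  also have "char_poly (block_quotient_mat (Suc q) C s) = [:- (C 0 0 * of_nat (s 0 - 1)), 1:]
      * (\<Prod>b\<in>{1..q}. [:- (C b b * of_nat (s b - 1)), 1:])
      - (\<Sum>b\<in>{1..q}. Polynomial.smult (C 0 b * C b 0 * of_nat (s 0 * s b))
           (\<Prod>c\<in>{1..q} - {b}. [:- (C c c * of_nat (s c - 1)), 1:]))"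
    by (rule char_poly_star_block_quotient) (use C_leaves s_pos in auto)
  finally show ?thesis
    by (simp only: C_diag C_hub lin_def of_nat_mult[symmetric] lessThan_Suc_atMost)
qed

section \<open>The dihedral group\<close>

lemma dihedral_carrier: "carrier (dihedral_group n) = {0..<int n} \<times> UNIV"
  by (simp add: dihedral_group_def)

lemma dihedral_mult:
  "(i, s) \<otimes>\<^bsub>dihedral_group n\<^esub> (j, t) = ((if s then i - j else i + j) mod int n, s \<noteq> t)"
  by (simp add: dihedral_group_def)

lemma dihedral_one: "\<one>\<^bsub>dihedral_group n\<^esub> = (0, False)"
  by (simp add: dihedral_group_def)

lemma group_dihedral_group:
  assumes "n \<ge> 1"
  shows "group (dihedral_group n)"
proof (rule groupI)
  let ?D = "dihedral_group n"
  show "x \<otimes>\<^bsub>?D\<^esub> y \<in> carrier ?D" if "x \<in> carrier ?D" "y \<in> carrier ?D" for x y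
    using that assms by (cases x, cases y, auto simp: dihedral_carrier dihedral_mult)
  show "\<one>\<^bsub>?D\<^esub> \<in> carrier ?D" using assms by (simp add: dihedral_carrier dihedral_one)
  show "x \<otimes>\<^bsub>?D\<^esub> y \<otimes>\<^bsub>?D\<^esub> z = x \<otimes>\<^bsub>?D\<^esub> (y \<otimes>\<^bsub>?D\<^esub> z)" for x y z
    by (cases x, cases y, cases z) (auto simp: dihedral_mult mod_simps algebra_simps)
  show "\<one>\<^bsub>?D\<^esub> \<otimes>\<^bsub>?D\<^esub> x = x" if "x \<in> carrier ?D" for x
    using that by (cases x, auto simp: dihedral_carrier dihedral_mult dihedral_one)
  show "\<exists>y\<in>carrier ?D. y \<otimes>\<^bsub>?D\<^esub> x = \<one>\<^bsub>?D\<^esub>" if "x \<in> carrier ?D" for x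
  proof (cases x)
    case (Pair i s)
    show ?thesis
      by (rule bexI[of _ "(if s then i else (- i) mod int n, s)"])
         (use that Pair assms in \<open>auto simp: dihedral_carrier dihedral_mult dihedral_one mod_simps\<close>)
  qed
qed

lemma dihedral_inv:
  assumes "n \<ge> 1" and "(i, s) \<in> carrier (dihedral_group n)"
  shows "inv\<^bsub>dihedral_group n\<^esub> (i, s) = (if s then i else (- i) mod int n, s)"
  using assms by (intro group.inv_equality[OF group_dihedral_group])
    (auto simp: dihedral_carrier dihedral_mult dihedral_one mod_simps)

lemma dihedral_conjugate:
  assumes "n \<ge> 1" and "(k, s) \<in> carrier (dihedral_group n)"
  shows "(k, s) \<otimes>\<^bsub>dihedral_group n\<^esub> (i, t) \<otimes>\<^bsub>dihedral_group n\<^esub> inv\<^bsub>dihedral_group n\<^esub> (k, s)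
    = (((if t then 2 * k else 0) + (if s then - i else i)) mod int n, t)"
proof -
  have "(i + (k + (- k) mod int n)) mod int n = i mod int n"
    by (metis add.assoc add.right_neutral add.right_inverse mod_add_right_eq)
  thus ?thesis
    using assms by (cases s; cases t) (auto simp: dihedral_inv dihedral_mult mod_simps algebra_simps)
qed

lemma conjugate_in_dihedralE:
  assumes "n \<ge> 1" and "conjugate_in (dihedral_group n) (i, t) h"
  obtains k s where "h = (((if t then 2 * k else 0) + (if s then - i else i)) mod int n, t)"
  using assms dihedral_conjugate[OF assms(1)] unfolding conjugate_in_def by auto

lemma conjugate_in_dihedral_snd:
  assumes "n \<ge> 1" and "conjugate_in (dihedral_group n) (i, t) (a, u)"
  shows "u = t"
  using conjugate_in_dihedralE[OF assms] by (metis prod.inject)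

lemma conjugate_rotationD:
  assumes "n \<ge> 1" and "conjugate_in (dihedral_group n) (i, False) (a, u)"
  shows "\<not> u \<and> (int n dvd 2 * a \<longleftrightarrow> int n dvd 2 * i)"
proof -
  obtain k s where "(a, u) = (((if False then 2 * k else 0) + (if s then - i else i)) mod int n, False)"
    using conjugate_in_dihedralE[OF assms] by blast
  hence a: "(a, u) = ((if s then - i else i) mod int n, False)" by (simp only: if_False add_0)
  have "int n dvd 2 * (x mod int n) \<longleftrightarrow> int n dvd 2 * x" for x
    by (simp add: dvd_eq_mod_eq_0 mod_mult_right_eq)
  hence "int n dvd 2 * ((if s then - i else i) mod int n) \<longleftrightarrow> int n dvd 2 * i"
    by simp
  thus ?thesis using a by simp
qed

lemma conjugate_reflectionD:
  assumes "n \<ge> 1" and "even n" and "conjugate_in (dihedral_group n) (i, True) (a, u)"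
  shows "u \<and> even (a - i)"
proof -
  obtain k s where "(a, u) = (((if True then 2 * k else 0) + (if s then - i else i)) mod int n, True)"
    using conjugate_in_dihedralE[OF assms(1,3)] by blast
  hence a: "(a, u) = ((2 * k + (if s then - i else i)) mod int n, True)" by (simp only: if_True)
  have "even (x mod int n) \<longleftrightarrow> even x" for x
    using \<open>even n\<close> by (simp add: dvd_mod_iff)
  hence "even ((2 * k + (if s then - i else i)) mod int n - i)"
    by (cases s) simp_all
  thus ?thesis using a by simp
qed

lemma conjugate_reflectionsI:
  assumes "n \<ge> 1" and "0 \<le> j" "j < int n" and "odd n \<or> even (j - i)"
  shows "conjugate_in (dihedral_group n) (i, True) (j, True)"
proof -
  obtain k where k: "j = (2 * k + i) mod int n"
  proof (cases "even (j - i)")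
    case True
    then obtain k where "j - i = 2 * k" by (rule evenE)
    thus ?thesis using that assms by (metis add.commute diff_add_cancel mod_pos_pos_trivial)
  next
    case False
    hence "odd n" using assms by simp
    then obtain h where h: "int n = 2 * h + 1" by (metis odd_two_times_div_two_succ of_nat_add of_nat_mult of_nat_numeral of_nat_1)
    have "(2 * ((j - i) * (h + 1)) + i) mod int n = (j + (j - i) * int n) mod int n"
      unfolding h by (simp add: algebra_simps)
    thus ?thesis using that[of "(j - i) * (h + 1)"] assms by simp
  qed
  have "(k mod int n, False) \<otimes>\<^bsub>dihedral_group n\<^esub> (i, True) \<otimes>\<^bsub>dihedral_group n\<^esub> inv\<^bsub>dihedral_group n\<^esub> (k mod int n, False)
    = (j, True)"
  proof -
    have "(2 * (k mod int n) + i) mod int n = j"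
      unfolding k by (metis mod_add_left_eq mod_mult_right_eq)
    thus ?thesis using assms(1) by (subst dihedral_conjugate) (auto simp: dihedral_carrier)
  qed
  thus ?thesis
    unfolding conjugate_in_def using assms(1)
    by (intro bexI[of _ "(k mod int n, False)"]) (auto simp: dihedral_carrier)
qed

lemma rotations_commute:
  "(i, False) \<otimes>\<^bsub>dihedral_group n\<^esub> (j, False) = (j, False) \<otimes>\<^bsub>dihedral_group n\<^esub> (i, False)"
  by (simp add: dihedral_mult add.commute)

lemma rotation_reflection_commute_iff:
  "(i, False) \<otimes>\<^bsub>dihedral_group n\<^esub> (j, True) = (j, True) \<otimes>\<^bsub>dihedral_group n\<^esub> (i, False) \<longleftrightarrow> int n dvd 2 * i"
proof -
  have "(i, False) \<otimes>\<^bsub>dihedral_group n\<^esub> (j, True) = (j, True) \<otimes>\<^bsub>dihedral_group n\<^esub> (i, False)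
      \<longleftrightarrow> (i + j) mod int n = (j - i) mod int n"
    by (simp add: dihedral_mult)
  also have "\<dots> \<longleftrightarrow> int n dvd 2 * i"
    by (simp add: mod_eq_dvd_iff algebra_simps mult_2)
  finally show ?thesis .
qed

lemma reflections_commute_iff:
  "(i, True) \<otimes>\<^bsub>dihedral_group n\<^esub> (j, True) = (j, True) \<otimes>\<^bsub>dihedral_group n\<^esub> (i, True) \<longleftrightarrow> int n dvd 2 * (i - j)"
proof -
  have "(i, True) \<otimes>\<^bsub>dihedral_group n\<^esub> (j, True) = (j, True) \<otimes>\<^bsub>dihedral_group n\<^esub> (i, True)
      \<longleftrightarrow> (i - j) mod int n = (j - i) mod int n"
    by (simp add: dihedral_mult)
  also have "\<dots> \<longleftrightarrow> int n dvd 2 * (i - j)"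
    by (simp add: mod_eq_dvd_iff algebra_simps mult_2)
  finally show ?thesis .
qed

section \<open>The conjugacy super commuting graph of D_2n\<close>

lemma (in group) conjugate_in_refl: "g \<in> carrier G \<Longrightarrow> conjugate_in G g g"
  unfolding conjugate_in_def by (intro bexI[of _ \<one>]) auto

lemma (in group) conjugate_in_sym:
  assumes "g \<in> carrier G" and "conjugate_in G g h"
  shows "conjugate_in G h g"
proof -
  obtain x where x: "x \<in> carrier G" "h = x \<otimes> g \<otimes> inv x"
    using assms(2) unfolding conjugate_in_def by blast
  hence "g = inv x \<otimes> h \<otimes> inv (inv x)"
    using assms(1) by (simp add: m_assoc inv_solve_left)
  thus ?thesis
    unfolding conjugate_in_def using x by (intro bexI[of _ "inv x"]) auto
qed

lemma (in group) csc_adj_if_commute: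
  assumes "g \<in> carrier G" "h \<in> carrier G" "g \<noteq> h" "g \<otimes> h = h \<otimes> g"
  shows "csc_adj G g h"
  unfolding csc_adj_def using assms conjugate_in_refl by blast

lemma (in group) csc_adj_sym: "csc_adj G g h \<Longrightarrow> csc_adj G h g"
  unfolding csc_adj_def by (metis conjugate_in_sym)

lemma csc_adj_rotation_reflection_iff:
  assumes "n \<ge> 1" and "(i, False) \<in> carrier (dihedral_group n)" "(j, True) \<in> carrier (dihedral_group n)"
  shows "csc_adj (dihedral_group n) (i, False) (j, True) \<longleftrightarrow> int n dvd 2 * i"
proof
  assume "int n dvd 2 * i"
  thus "csc_adj (dihedral_group n) (i, False) (j, True)"
    using assms by (intro group.csc_adj_if_commute[OF group_dihedral_group]) (auto simp: rotation_reflection_commute_iff)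
next
  assume adj: "csc_adj (dihedral_group n) (i, False) (j, True)"
  have "\<not> conjugate_in (dihedral_group n) (i, False) (j, True)"
    using conjugate_in_dihedral_snd[OF assms(1)] by blast
  then obtain a u b t where
    conj_a: "conjugate_in (dihedral_group n) (i, False) (a, u)" and
    conj_b: "conjugate_in (dihedral_group n) (j, True) (b, t)" and
    comm: "(a, u) \<otimes>\<^bsub>dihedral_group n\<^esub> (b, t) = (b, t) \<otimes>\<^bsub>dihedral_group n\<^esub> (a, u)"
    using adj unfolding csc_adj_def by auto
  have "\<not> u" "int n dvd 2 * a \<longleftrightarrow> int n dvd 2 * i"
    using conjugate_rotationD[OF assms(1) conj_a] by auto
  moreover have t by (rule conjugate_in_dihedral_snd[OF assms(1) conj_b, simplified])
  ultimately show "int n dvd 2 * i"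
    using comm rotation_reflection_commute_iff by auto
qed

lemma csc_adj_reflections_2_mod_4:
  assumes "n \<ge> 1" and "even n" and "odd (n div 2)" and "odd (j - i)"
    and i: "(i, True) \<in> carrier (dihedral_group n)" and j: "(j, True) \<in> carrier (dihedral_group n)"
  shows "csc_adj (dihedral_group n) (i, True) (j, True)"
proof -
  txt \<open>The reflection a^(i + n/2) b commutes with a^i b and is conjugate to a^j b.\<close>
  define h where "h = int (n div 2)"
  have "n = 2 * (n div 2)"
    using \<open>even n\<close> by simp
  hence h: "int n = 2 * h" "odd h"
    using \<open>odd (n div 2)\<close> unfolding h_def by (metis of_nat_mult of_nat_numeral, simp)
  define b where "b = (i + h) mod int n"
  define q where "q = (i + h) div int n"
  have b_eq: "b = i + h - 2 * (h * q)"
    using div_mult_mod_eq[of "i + h" "int n"] unfolding b_def q_def h(1) by (simp add: algebra_simps)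
  have b: "(b, True) \<in> carrier (dihedral_group n)"
    unfolding b_def using assms(1) by (simp add: dihedral_carrier)
  have "(b, True) \<noteq> (i, True)"
  proof
    assume "(b, True) = (i, True)"
    hence "h = 2 * (h * q)" using b_eq by simp
    with h(2) show False by (metis dvd_triv_left)
  qed
  moreover have "conjugate_in (dihedral_group n) (j, True) (b, True)"
    using b \<open>odd (j - i)\<close> h(2) by (intro conjugate_reflectionsI[OF assms(1)]) (auto simp: dihedral_carrier b_eq)
  moreover have "(i, True) \<otimes>\<^bsub>dihedral_group n\<^esub> (b, True) = (b, True) \<otimes>\<^bsub>dihedral_group n\<^esub> (i, True)"
    unfolding reflections_commute_iff h(1) b_eq by (simp add: algebra_simps)
  ultimately show ?thesis
    unfolding csc_adj_def using i j b \<open>odd (j - i)\<close> group.conjugate_in_refl[OF group_dihedral_group[OF assms(1)] i]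
    by (intro conjI disjI2 bexI[of _ "(i, True)"] bexI[of _ "(b, True)"]) auto
qed

lemma not_csc_adj_reflections_4_dvd:
  assumes "n \<ge> 1" and "4 dvd n" and "odd (j - i)"
  shows "\<not> csc_adj (dihedral_group n) (i, True) (j, True)"
proof
  assume adj: "csc_adj (dihedral_group n) (i, True) (j, True)"
  have n: "even n" using \<open>4 dvd n\<close> by (auto elim!: dvdE)
  have "\<not> conjugate_in (dihedral_group n) (i, True) (j, True)"
    using conjugate_reflectionD[OF assms(1) n] \<open>odd (j - i)\<close> by fastforce
  then obtain a u b t where
    conj_a: "conjugate_in (dihedral_group n) (i, True) (a, u)" and
    conj_b: "conjugate_in (dihedral_group n) (j, True) (b, t)" and
    comm: "(a, u) \<otimes>\<^bsub>dihedral_group n\<^esub> (b, t) = (b, t) \<otimes>\<^bsub>dihedral_group n\<^esub> (a, u)"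
    using adj unfolding csc_adj_def by auto
  have a: "u" "even (a - i)" and b: "t" "even (b - j)"
    using conjugate_reflectionD[OF assms(1) n] conj_a conj_b by auto
  obtain m where "int n = 2 * (2 * int m)"
    using \<open>4 dvd n\<close> by (auto elim!: dvdE)
  hence "2 * (2 * int m) dvd 2 * (a - b)"
    using comm a(1) b(1) reflections_commute_iff by metis
  hence "even (a - b)"
    by (metis dvd_mult_cancel_left dvd_mult_left zero_neq_numeral)
  thus False using a(2) b(2) \<open>odd (j - i)\<close> by presburger
qed

lemma csc_adj_reflections_iff:
  assumes "n \<ge> 1" and i: "(i, True) \<in> carrier (dihedral_group n)" and j: "(j, True) \<in> carrier (dihedral_group n)"
  shows "csc_adj (dihedral_group n) (i, True) (j, True) \<longleftrightarrow> i \<noteq> j \<and> (odd n \<or> odd (n div 2) \<or> even (j - i))"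
proof (cases "odd n \<or> even (j - i)")
  case True
  thus ?thesis
    using conjugate_reflectionsI[OF assms(1)] i j unfolding csc_adj_def by (auto simp: dihedral_carrier)
next
  case False
  moreover have "4 dvd n \<longleftrightarrow> even n \<and> even (n div 2)" by presburger
  ultimately show ?thesis
    using csc_adj_reflections_2_mod_4[OF assms(1) _ _ _ i j] not_csc_adj_reflections_4_dvd[OF assms(1)] by auto
qed

text \<open>Class 0 is the centre of D_2n.\<close>

definition dihedral_class :: "nat \<Rightarrow> int \<times> bool \<Rightarrow> nat" where
  "dihedral_class n g =
     (if snd g then (if 4 dvd n \<and> odd (fst g) then 3 else 2) else if int n dvd 2 * fst g then 0 else 1)"

lemma csc_adj_dihedral_iff:
  assumes "n \<ge> 1" and "g \<in> carrier (dihedral_group n)" "h \<in> carrier (dihedral_group n)"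
  shows "csc_adj (dihedral_group n) g h \<longleftrightarrow> g \<noteq> h \<and>
    (dihedral_class n g = dihedral_class n h \<or> dihedral_class n g = 0 \<or> dihedral_class n h = 0)"
proof -
  interpret group "dihedral_group n" by (rule group_dihedral_group[OF assms(1)])
  obtain i s j t where g: "g = (i, s)" and h: "h = (j, t)" by fastforce
  have four: "4 dvd n \<longleftrightarrow> even n \<and> even (n div 2)" by presburger
  show ?thesis
  proof (cases s; cases t)
    assume "\<not> s" "\<not> t"
    moreover have "csc_adj (dihedral_group n) g h" if "g \<noteq> h"
      using assms g h that \<open>\<not> s\<close> \<open>\<not> t\<close> by (intro csc_adj_if_commute) (auto simp: rotations_commute)
    moreover have "\<not> csc_adj (dihedral_group n) g g"
      by (simp add: csc_adj_def)
    ultimately show ?thesis using g h by (auto simp: dihedral_class_def)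
  next
    assume "\<not> s" "t"
    thus ?thesis using assms g h csc_adj_rotation_reflection_iff by (auto simp: dihedral_class_def)
  next
    assume "s" "\<not> t"
    moreover have "csc_adj (dihedral_group n) g h \<longleftrightarrow> csc_adj (dihedral_group n) h g"
      using csc_adj_sym by blast
    ultimately show ?thesis
      using assms g h csc_adj_rotation_reflection_iff[OF assms(1), of j i] by (auto simp: dihedral_class_def)
  next
    assume "s" "t"
    thus ?thesis using assms g h csc_adj_reflections_iff four by (auto simp: dihedral_class_def)
  qed
qed

lemma card_dihedral_carrier_filter:
  "card {g \<in> carrier (dihedral_group n). P g}
     = card {i \<in> {0..<int n}. P (i, False)} + card {i \<in> {0..<int n}. P (i, True)}"
proof -
  have "{g \<in> carrier (dihedral_group n). P g}
      = (\<lambda>i. (i, False)) ` {i \<in> {0..<int n}. P (i, False)} \<union> (\<lambda>i. (i, True)) ` {i \<in> {0..<int n}. P (i, True)}"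
    by (auto simp: dihedral_carrier image_iff) (metis (full_types))
  also have "card \<dots> = card ((\<lambda>i. (i, False)) ` {i \<in> {0..<int n}. P (i, False)})
      + card ((\<lambda>i. (i, True)) ` {i \<in> {0..<int n}. P (i, True)})"
    by (rule card_Un_disjoint) (auto intro!: finite_imageI finite_subset[of _ "{0..<int n}"])
  finally show ?thesis by (simp add: card_image inj_on_def)
qed

lemma central_rotation_iff:
  assumes "0 \<le> i" "i < int n"
  shows "int n dvd 2 * i \<longleftrightarrow> i = 0 \<or> 2 * i = int n"
proof
  assume "int n dvd 2 * i"
  then obtain k where k: "2 * i = int n * k" by (rule dvdE)
  have n: "int n > 0" using assms by simp
  have "0 \<le> int n * k" "int n * k < int n * 2"
    unfolding k[symmetric] using assms by linarith+
  hence "0 \<le> k" "k < 2" using n by (simp_all add: zero_le_mult_iff mult_less_cancel_left_pos)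
  thus "i = 0 \<or> 2 * i = int n" using k by (cases "k = 0") auto
qed auto

lemma card_central_rotations:
  assumes "n \<ge> 1"
  shows "card {i \<in> {0..<int n}. int n dvd 2 * i} = (if odd n then 1 else 2)"
proof -
  have central: "{i \<in> {0..<int n}. int n dvd 2 * i} = {i \<in> {0..<int n}. i = 0 \<or> 2 * i = int n}"
    using central_rotation_iff by auto
  show ?thesis
  proof (cases "odd n")
    case True
    hence "{i \<in> {0..<int n}. i = 0 \<or> 2 * i = int n} = {0}"
      using assms by auto presburger
    thus ?thesis using True central by simp
  next
    case False
    then obtain b where b: "n = 2 * b" by (auto elim: evenE)
    hence "{i \<in> {0..<int n}. i = 0 \<or> 2 * i = int n} = {0, int b}"
      using assms by auto
    thus ?thesis using False central assms b by simp
  qed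
qed

lemma card_even_below:
  assumes "even n"
  shows "card {i \<in> {0..<int n}. even i} = n div 2"
proof -
  have "{i \<in> {0..<int n}. even i} = (\<lambda>j. 2 * j) ` {0..<int (n div 2)}"
    using assms by (auto simp: image_iff elim!: evenE)
  thus ?thesis by (simp add: card_image inj_on_def)
qed

lemma card_odd_below:
  assumes "even n"
  shows "card {i \<in> {0..<int n}. odd i} = n div 2"
proof -
  have "{i \<in> {0..<int n}. odd i} = (\<lambda>j. 2 * j + 1) ` {0..<int (n div 2)}"
    using assms by (auto simp: image_iff elim!: evenE oddE) presburger+
  thus ?thesis by (simp add: card_image inj_on_def)
qed

lemma card_dihedral_class:
  assumes "n \<ge> 1"
  shows "card {g \<in> carrier (dihedral_group n). dihedral_class n g = 0} = (if odd n then 1 else 2)"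
    and "card {g \<in> carrier (dihedral_group n). dihedral_class n g = 1} = (if odd n then n - 1 else n - 2)"
    and "\<not> 4 dvd n \<Longrightarrow> card {g \<in> carrier (dihedral_group n). dihedral_class n g = 2} = n"
    and "4 dvd n \<Longrightarrow> card {g \<in> carrier (dihedral_group n). dihedral_class n g = 2} = n div 2"
    and "4 dvd n \<Longrightarrow> card {g \<in> carrier (dihedral_group n). dihedral_class n g = 3} = n div 2"
proof -
  let ?R = "{0..<int n}"
  have central: "card {i \<in> ?R. int n dvd 2 * i} = (if odd n then 1 else 2)"
    by (rule card_central_rotations[OF assms])
  have class_0: "{i \<in> ?R. dihedral_class n (i, False) = 0} = {i \<in> ?R. int n dvd 2 * i}"
    "{i \<in> ?R. dihedral_class n (i, True) = 0} = {}"
    by (auto simp: dihedral_class_def)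
  show "card {g \<in> carrier (dihedral_group n). dihedral_class n g = 0} = (if odd n then 1 else 2)"
    unfolding card_dihedral_carrier_filter class_0 central by simp
  have class_1: "{i \<in> ?R. dihedral_class n (i, False) = 1} = ?R - {i \<in> ?R. int n dvd 2 * i}"
    "{i \<in> ?R. dihedral_class n (i, True) = 1} = {}"
    by (auto simp: dihedral_class_def)
  show "card {g \<in> carrier (dihedral_group n). dihedral_class n g = 1} = (if odd n then n - 1 else n - 2)"
  proof -
    have "card (?R - {i \<in> ?R. int n dvd 2 * i}) = card ?R - card {i \<in> ?R. int n dvd 2 * i}"
      by (rule card_Diff_subset) (auto intro: finite_subset[of _ ?R])
    thus ?thesis unfolding card_dihedral_carrier_filter class_1 central by simp
  qed
  have rotations_2: "{i \<in> ?R. dihedral_class n (i, False) = 2} = {}"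
    by (auto simp: dihedral_class_def)
  show "card {g \<in> carrier (dihedral_group n). dihedral_class n g = 2} = n" if "\<not> 4 dvd n"
  proof -
    have reflections_2: "{i \<in> ?R. dihedral_class n (i, True) = 2} = ?R"
      using that by (auto simp: dihedral_class_def)
    show ?thesis unfolding card_dihedral_carrier_filter rotations_2 reflections_2 by simp
  qed
  show "card {g \<in> carrier (dihedral_group n). dihedral_class n g = 2} = n div 2" if "4 dvd n"
  proof -
    have reflections_2: "{i \<in> ?R. dihedral_class n (i, True) = 2} = {i \<in> ?R. even i}"
      using that by (auto simp: dihedral_class_def)
    show ?thesis unfolding card_dihedral_carrier_filter rotations_2 reflections_2
      using card_even_below[of n] that by (simp add: dvd_trans[of 2 4 n])
  qed
  show "card {g \<in> carrier (dihedral_group n). dihedral_class n g = 3} = n div 2" if "4 dvd n"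
  proof -
    have class_3: "{i \<in> ?R. dihedral_class n (i, False) = 3} = {}"
      "{i \<in> ?R. dihedral_class n (i, True) = 3} = {i \<in> ?R. odd i}"
      using that by (auto simp: dihedral_class_def)
    show ?thesis unfolding card_dihedral_carrier_filter class_3
      using card_odd_below[of n] that by (simp add: dvd_trans[of 2 4 n])
  qed
qed

lemma distinct_dihedral_vertices: "distinct (dihedral_vertices n)"
  by (auto simp: dihedral_vertices_def distinct_map inj_on_def)

lemma set_dihedral_vertices: "set (dihedral_vertices n) = carrier (dihedral_group n)"
proof -
  have "(a, s) \<in> set (dihedral_vertices n)" if "0 \<le> a" "a < int n" for a s
    using that by (cases s) (auto simp: dihedral_vertices_def image_iff intro!: bexI[of _ "nat a"])
  moreover have "set (dihedral_vertices n) \<subseteq> carrier (dihedral_group n)"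
    by (auto simp: dihedral_vertices_def dihedral_carrier)
  ultimately show ?thesis by (auto simp: dihedral_carrier)
qed

lemma sombor_spectrum_dihedral:
  fixes n q :: nat and s d :: "nat \<Rightarrow> nat"
  assumes "n \<ge> 1"
    and "\<And>g. g \<in> carrier (dihedral_group n) \<Longrightarrow> dihedral_class n g \<le> q"
    and "\<And>b. b \<le> q \<Longrightarrow> card {g \<in> carrier (dihedral_group n). dihedral_class n g = b} = s b"
    and "\<And>b. b \<le> q \<Longrightarrow> s b \<ge> 1"
    and "\<And>b. b \<le> q \<Longrightarrow> d b = (if b = 0 then (\<Sum>c\<le>q. s c) else s 0 + s b) - 1"
  defines "r \<equiv> complex_of_real (sqrt 2)"
  shows "sombor_spectrum (dihedral_group n) (dihedral_vertices n)
    = (\<Sum>b\<le>q. replicate_mset (s b - 1) (- (of_nat (d b) * r)))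
      + proots (lin (of_nat (d 0) * r * of_nat (s 0 - 1)) * (\<Prod>b\<in>{1..q}. lin (of_nat (d b) * r * of_nat (s b - 1)))
        - (\<Sum>b\<in>{1..q}. Polynomial.smult (of_nat ((d 0 ^ 2 + d b ^ 2) * (s 0 * s b)))
             (\<Prod>c\<in>{1..q} - {b}. lin (of_nat (d c) * r * of_nat (s c - 1)))))"
  unfolding r_def
  by (rule sombor_spectrum_clique_star)
     (use assms distinct_dihedral_vertices set_dihedral_vertices csc_adj_dihedral_iff in auto)

lemma sombor_spectrum_dihedral_odd:
  fixes n :: nat
  assumes "n \<ge> 3" and "odd n"
  defines "m \<equiv> (of_nat n :: complex)" and "r \<equiv> complex_of_real (sqrt 2)"
  shows "sombor_spectrum (dihedral_group n) (dihedral_vertices n)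
    = replicate_mset (n - 2) (- (m - 1) * r) + replicate_mset (n - 1) (- m * r)
        + proots ([:0, 1:] * lin ((m - 1) * (m - 2) * r) * lin (m * (m - 1) * r)
            - Polynomial.smult ((m - 1) * (5 * m^2 - 6 * m + 2)) (lin (m * (m - 1) * r))
            - Polynomial.smult (m * (5 * m^2 - 4 * m + 1)) (lin ((m - 1) * (m - 2) * r)))"
proof -
  define class_size where "class_size b = (if b = 0 then 1 else if b = 1 then n - 1 else n)" for b :: nat
  define class_deg where "class_deg b = (if b = 0 then 2 * n - 1 else if b = 1 then n - 1 else n)" for b :: nat
  have n: "n \<ge> 1" "\<not> 4 dvd n" using assms(1,2) by (auto dest: dvd_trans[of 2 4 n])
  have classes: "dihedral_class n g \<le> 2" if "g \<in> carrier (dihedral_group n)" for g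
    using n by (simp add: dihedral_class_def)
  have sizes: "card {g \<in> carrier (dihedral_group n). dihedral_class n g = b} = class_size b"
    if "b \<le> 2" for b
    using that card_dihedral_class[OF n(1)] n assms(2) by (auto simp: class_size_def le_Suc_eq numeral_2_eq_2)
  have sizes_pos: "class_size b \<ge> 1" if "b \<le> 2" for b
    using assms(1) by (auto simp: class_size_def)
  have degrees: "class_deg b = (if b = 0 then \<Sum>c\<le>2. class_size c else class_size 0 + class_size b) - 1"
    if "b \<le> 2" for b
    using that assms(1) by (auto simp: class_size_def class_deg_def le_Suc_eq numeral_2_eq_2)
  have sets: "{..2::nat} = {0, 1, 2}" "{1..2::nat} = {1, 2}" by auto
  show ?thesis
    apply (subst sombor_spectrum_dihedral[where q = 2 and s = class_size and d = class_deg, folded r_def])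
    apply (fact n(1) classes sizes sizes_pos degrees)+
    apply (unfold sets)
    apply (intro arg_cong2[where f = "(+)"] arg_cong[where f = proots])
    subgoal using assms(1)
      by (simp add: class_size_def class_deg_def m_def of_nat_diff numeral_2_eq_2 algebra_simps)
    subgoal by (rule poly_eq_poly_eq_iff[THEN iffD1], rule ext)
        (use assms(1) in \<open>simp add: class_size_def class_deg_def m_def of_nat_diff poly_prod lin_def
            insert_Diff_if,
          simp add: algebra_simps power2_eq_square\<close>)
    done
qed

lemma sombor_spectrum_dihedral_2_mod_4:
  fixes n :: nat
  assumes "n \<ge> 3" and "even n" and "odd (n div 2)"
  defines "m \<equiv> (of_nat n :: complex)" and "r \<equiv> complex_of_real (sqrt 2)"
  shows "sombor_spectrum (dihedral_group n) (dihedral_vertices n)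
    = replicate_mset (n - 1) (- (m + 1) * r) + replicate_mset (n - 3) (- (m - 1) * r)
        + {# - (2 * m - 1) * r #}
        + proots (lin ((2 * m - 1) * r) * lin ((m - 1) * (m + 1) * r) * lin ((m - 1) * (m - 3) * r)
            - Polynomial.smult (2 * (m - 2) * (5 * m^2 - 6 * m + 2)) (lin ((m - 1) * (m + 1) * r))
            - Polynomial.smult (2 * m * (5 * m^2 - 2 * m + 2)) (lin ((m - 1) * (m - 3) * r)))"
proof -
  define class_size where "class_size b = (if b = 0 then 2 else if b = 1 then n - 2 else n)" for b :: nat
  define class_deg where "class_deg b = (if b = 0 then 2 * n - 1 else if b = 1 then n - 1 else n + 1)"
    for b :: nat
  have n: "n \<ge> 1" "\<not> 4 dvd n" using assms(1,3) by (auto elim!: dvdE)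
  have classes: "dihedral_class n g \<le> 2" if "g \<in> carrier (dihedral_group n)" for g
    using n by (simp add: dihedral_class_def)
  have sizes: "card {g \<in> carrier (dihedral_group n). dihedral_class n g = b} = class_size b"
    if "b \<le> 2" for b
    using that card_dihedral_class[OF n(1)] n assms(2) by (auto simp: class_size_def le_Suc_eq numeral_2_eq_2)
  have sizes_pos: "class_size b \<ge> 1" if "b \<le> 2" for b
    using assms(1) by (auto simp: class_size_def)
  have degrees: "class_deg b = (if b = 0 then \<Sum>c\<le>2. class_size c else class_size 0 + class_size b) - 1"
    if "b \<le> 2" for b
    using that assms(1) by (auto simp: class_size_def class_deg_def le_Suc_eq numeral_2_eq_2)
  have sets: "{..2::nat} = {0, 1, 2}" "{1..2::nat} = {1, 2}" by auto
  show ?thesis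
    apply (subst sombor_spectrum_dihedral[where q = 2 and s = class_size and d = class_deg, folded r_def])
    apply (fact n(1) classes sizes sizes_pos degrees)+
    apply (unfold sets)
    apply (intro arg_cong2[where f = "(+)"] arg_cong[where f = proots])
    subgoal using assms(1)
      by (simp add: class_size_def class_deg_def m_def of_nat_diff numeral_2_eq_2 numeral_3_eq_3 algebra_simps)
    subgoal by (rule poly_eq_poly_eq_iff[THEN iffD1], rule ext)
        (use assms(1) in \<open>simp add: class_size_def class_deg_def m_def of_nat_diff poly_prod lin_def
            insert_Diff_if,
          simp add: algebra_simps power2_eq_square\<close>)
    done
qed

lemma replicate_mset_add: "replicate_mset (a + b) x = replicate_mset a x + replicate_mset b x"
  by (induction a) auto

lemma sombor_spectrum_dihedral_4_dvd:
  fixes n :: nat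
  assumes "n \<ge> 3" and "4 dvd n"
  defines "m \<equiv> (of_nat n :: complex)" and "r \<equiv> complex_of_real (sqrt 2)"
  shows "sombor_spectrum (dihedral_group n) (dihedral_vertices n)
    = replicate_mset (n - 2) (- (m / 2 + 1) * r) + replicate_mset (n - 3) (- (m - 1) * r)
        + {# - (2 * m - 1) * r #}
        + proots (lin ((2 * m - 1) * r) * lin ((m - 1) * (m - 3) * r) * lin ((m / 2 - 1) * (m / 2 + 1) * r) ^ 2
            - Polynomial.smult (2 * (m - 2) * (5 * m^2 - 6 * m + 2)) (lin ((m / 2 - 1) * (m / 2 + 1) * r) ^ 2)
            - Polynomial.smult (2 * m * ((2 * m - 1)^2 + (m / 2 + 1)^2))
                (lin ((m - 3) * (m - 1) * r) * lin ((m / 2 - 1) * (m / 2 + 1) * r)))"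
proof -
  obtain h where h: "n = 2 * h" "h \<ge> 2" using assms(1,2) by (auto elim!: dvdE)
  define class_size where "class_size b = (if b = 0 then 2 else if b = 1 then n - 2 else h)" for b :: nat
  define class_deg where "class_deg b = (if b = 0 then 2 * n - 1 else if b = 1 then n - 1 else h + 1)" for b :: nat
  have n: "n \<ge> 1" using assms(1) by simp
  have classes: "dihedral_class n g \<le> 3" if "g \<in> carrier (dihedral_group n)" for g
    by (simp add: dihedral_class_def)
  have sizes: "card {g \<in> carrier (dihedral_group n). dihedral_class n g = b} = class_size b"
    if "b \<le> 3" for b
  proof -
    have "b = 0 \<or> b = 1 \<or> b = 2 \<or> b = 3" using that by auto
    thus ?thesis using card_dihedral_class[OF n] assms(2) h by (auto simp: class_size_def)
  qed
  have sizes_pos: "class_size b \<ge> 1" if "b \<le> 3" for b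
    using assms(1) h by (auto simp: class_size_def)
  have degrees: "class_deg b = (if b = 0 then \<Sum>c\<le>3. class_size c else class_size 0 + class_size b) - 1"
    if "b \<le> 3" for b
  proof -
    have "b = 0 \<or> b = 1 \<or> b = 2 \<or> b = 3" using that by auto
    thus ?thesis using h by (auto simp: class_size_def class_deg_def numeral_3_eq_3)
  qed
  have sets: "{..3::nat} = {0, 1, 2, 3}" "{1..3::nat} = {1, 2, 3}" by auto
  have n_minus_2: "n - 2 = (h - 1) + (h - 1)" and half: "complex_of_nat n / 2 = of_nat h"
    using h by simp_all
  show ?thesis
    apply (subst sombor_spectrum_dihedral[where q = 3 and s = class_size and d = class_deg, folded r_def])
    apply (fact n classes sizes sizes_pos degrees)+
    apply (unfold sets)
    apply (intro arg_cong2[where f = "(+)"] arg_cong[where f = proots])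
    subgoal unfolding n_minus_2 replicate_mset_add using assms(1)
      by (simp add: class_size_def class_deg_def m_def half of_nat_diff numeral_3_eq_3 algebra_simps)
    subgoal by (rule poly_eq_poly_eq_iff[THEN iffD1], rule ext)
        (use h in \<open>simp add: class_size_def class_deg_def m_def of_nat_diff poly_prod lin_def
            insert_Diff_if,
          simp add: algebra_simps power2_eq_square\<close>)
    done
qed

theorem corollary4p9:
  fixes n :: nat
  assumes "n \<ge> 3"
  defines "m \<equiv> (of_nat n :: complex)"
      and "r \<equiv> complex_of_real (sqrt 2)"
      and "Spec \<equiv> sombor_spectrum (dihedral_group n) (dihedral_vertices n)"
  shows
   "(odd n \<longrightarrow>
      Spec = replicate_mset (n - 2) (- (m - 1) * r) + replicate_mset (n - 1) (- m * r)
        + proots ([:0, 1:] * lin ((m - 1) * (m - 2) * r) * lin (m * (m - 1) * r)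
            - Polynomial.smult ((m - 1) * (5 * m^2 - 6 * m + 2)) (lin (m * (m - 1) * r))
            - Polynomial.smult (m * (5 * m^2 - 4 * m + 1)) (lin ((m - 1) * (m - 2) * r)))) \<and>
    (even n \<and> odd (n div 2) \<longrightarrow>
      Spec = replicate_mset (n - 1) (- (m + 1) * r) + replicate_mset (n - 3) (- (m - 1) * r)
        + {# - (2 * m - 1) * r #}
        + proots (lin ((2 * m - 1) * r) * lin ((m - 1) * (m + 1) * r) * lin ((m - 1) * (m - 3) * r)
            - Polynomial.smult (2 * (m - 2) * (5 * m^2 - 6 * m + 2)) (lin ((m - 1) * (m + 1) * r))
            - Polynomial.smult (2 * m * (5 * m^2 - 2 * m + 2)) (lin ((m - 1) * (m - 3) * r)))) \<and>
    (4 dvd n \<longrightarrow>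
      Spec = replicate_mset (n - 2) (- (m / 2 + 1) * r) + replicate_mset (n - 3) (- (m - 1) * r)
        + {# - (2 * m - 1) * r #}
        + proots (lin ((2 * m - 1) * r) * lin ((m - 1) * (m - 3) * r) * lin ((m / 2 - 1) * (m / 2 + 1) * r) ^ 2
            - Polynomial.smult (2 * (m - 2) * (5 * m^2 - 6 * m + 2)) (lin ((m / 2 - 1) * (m / 2 + 1) * r) ^ 2)
            - Polynomial.smult (2 * m * ((2 * m - 1)^2 + (m / 2 + 1)^2))
                (lin ((m - 3) * (m - 1) * r) * lin ((m / 2 - 1) * (m / 2 + 1) * r))))"
  using sombor_spectrum_dihedral_odd[OF assms(1)] sombor_spectrum_dihedral_2_mod_4[OF assms(1)]
    sombor_spectrum_dihedral_4_dvd[OF assms(1)]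
  unfolding Spec_def m_def r_def by blast

end
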